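(* Let $\mathcal M=(M,<,+,0,\ldots)$ be a definably complete locally o-minimal expansion of an ordered group. Let $(G,\tau)$ be a definable topological group having the definable curve selection property, $U$ a definable neighborhood of the identity $e$ in $G$, and $C$ a definably compact definable subset of $G$. Then $\bigcap_{h\in C}hUh^{-1}$ is a neighborhood of $e$.
   Context: "Definable" means definable in $\mathcal M$ with parameters. $\mathcal M$ is an expansion of an ordered group with dense order without endpoints; locally o-minimal: for every definable $Y\subseteq M$ and $a\in M$ there is an open interval $I\ni a$ with $Y\cap I$ a finite union of points and open intervals; definably complete: every definable subset of $M$ has sup and inf in $M\cup\{\pm\infty\}$. A definable topological group is a definable group with a topology having a definable open base in which multiplication and inversion are continuous. A definable subset is definably compact if, with the relative topology, every definable filtered family (any two members contain a common member) of nonempty closed subsets has nonempty intersection. A definable curve is a definable, not necessarily continuous, map from an open interval; for $\gamma:(a,b)\to X$, $\operatorname{Conv}_{\mathrm{left}}(\gamma)$ is the set of $x$ such that for every $t\in(a,b)$ and every definable neighborhood $A$ of $x$, $\gamma((a,t))\cap A\ne\emptyset$. A definable topological space $(X,\tau)$ has the definable curve selection property if for every definable $D\subseteq X$ and every $x$ in the frontier $\partial_\tau D$ there is a definable curve $\gamma:(a,b)\to D$ with $a\in M$ and $x\in\operatorname{Conv}_{\mathrm{left}}(\gamma)$. *)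

theory Defs
  imports "HOL-Analysis.Analysis" "HOL-Algebra.Group"
begin

text \<open>Points of M^n are lists of length n.  A structure on M (in the sense of
van den Dries) is given by the predicate S singling out the definable sets
(definable with parameters) of all arities.\<close>

definition arity :: "nat \<Rightarrow> 'm list set \<Rightarrow> bool" where
  "arity n A \<longleftrightarrow> (\<forall>x\<in>A. length x = n)"

definition fiber :: "'m list set \<Rightarrow> 'm list \<Rightarrow> nat \<Rightarrow> 'm list set" where
  "fiber F y n = {x. length x = n \<and> y @ x \<in> F}"

definition ordered_group :: "('m::linorder \<Rightarrow> 'm \<Rightarrow> 'm) \<Rightarrow> 'm \<Rightarrow> bool" where
  "ordered_group addm z \<longleftrightarrow>
     (\<forall>x y w. addm (addm x y) w = addm x (addm y w)) \<and>
     (\<forall>x. addm z x = x \<and> addm x z = x) \<and>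
     (\<forall>x. \<exists>y. addm x y = z \<and> addm y x = z) \<and>
     (\<forall>x y w. x < y \<longrightarrow> addm w x < addm w y \<and> addm x w < addm y w)"

definition definable_structure ::
  "('m::linorder \<Rightarrow> 'm \<Rightarrow> 'm) \<Rightarrow> ('m list set \<Rightarrow> bool) \<Rightarrow> bool" where
  "definable_structure addm S \<longleftrightarrow>
     (\<forall>A. S A \<longrightarrow> (\<exists>n. arity n A)) \<and>
     (\<forall>n. S {x. length x = n}) \<and>
     (\<forall>A B n. S A \<longrightarrow> S B \<longrightarrow> arity n A \<longrightarrow> arity n B \<longrightarrow> S (A \<union> B)) \<and>
     (\<forall>A B. S A \<longrightarrow> S B \<longrightarrow> S (A - B)) \<and>
     (\<forall>A B. S A \<longrightarrow> S B \<longrightarrow> S {x @ y | x y. x \<in> A \<and> y \<in> B}) \<and>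
     (\<forall>n i j. i < n \<longrightarrow> j < n \<longrightarrow> S {x. length x = n \<and> x ! i = x ! j}) \<and>
     (\<forall>A m. S A \<longrightarrow> S (take m ` A)) \<and>
     (\<forall>a. S {[a]}) \<and>
     S {[x, y] | x y. x < y} \<and>
     S {[x, y, w] | x y w. w = addm x y}"

definition def1 :: "('m list set \<Rightarrow> bool) \<Rightarrow> 'm set \<Rightarrow> bool" where
  "def1 S X \<longleftrightarrow> S ((\<lambda>x. [x]) ` X)"

definition locally_o_minimal :: "('m::linorder list set \<Rightarrow> bool) \<Rightarrow> bool" where
  "locally_o_minimal S \<longleftrightarrow>
     (\<forall>X a. def1 S X \<longrightarrow>
        (\<exists>l u. l < a \<and> a < u \<and>
           (\<exists>P Q. finite P \<and> finite Q \<and>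
              X \<inter> {l<..<u} = P \<union> (\<Union>(c, d)\<in>Q. {c<..<d}))))"

definition definably_complete :: "('m::linorder list set \<Rightarrow> bool) \<Rightarrow> bool" where
  "definably_complete S \<longleftrightarrow>
     (\<forall>X. def1 S X \<longrightarrow> X \<noteq> {} \<longrightarrow>
        ((bdd_above X \<longrightarrow> (\<exists>s. (\<forall>x\<in>X. x \<le> s) \<and> (\<forall>u. (\<forall>x\<in>X. x \<le> u) \<longrightarrow> s \<le> u))) \<and>
         (bdd_below X \<longrightarrow> (\<exists>s. (\<forall>x\<in>X. s \<le> x) \<and> (\<forall>u. (\<forall>x\<in>X. u \<le> x) \<longrightarrow> u \<le> s)))))"

definition definable_group ::
  "('m list set \<Rightarrow> bool) \<Rightarrow> nat \<Rightarrow> 'm list monoid \<Rightarrow> bool" where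
  "definable_group S n Gr \<longleftrightarrow>
     group Gr \<and> arity n (carrier Gr) \<and> S (carrier Gr) \<and>
     S {x @ y @ (x \<otimes>\<^bsub>Gr\<^esub> y) | x y. x \<in> carrier Gr \<and> y \<in> carrier Gr} \<and>
     S {x @ inv\<^bsub>Gr\<^esub> x | x. x \<in> carrier Gr}"

definition definable_open_base ::
  "('m list set \<Rightarrow> bool) \<Rightarrow> nat \<Rightarrow> 'm list topology \<Rightarrow> bool" where
  "definable_open_base S n \<tau> \<longleftrightarrow>
     (\<exists>k B. S B \<and> arity (k + n) B \<and>
        (\<forall>y. length y = k \<longrightarrow> openin \<tau> (fiber B y n)) \<and>
        (\<forall>W x. openin \<tau> W \<longrightarrow> x \<in> W \<longrightarrow>
           (\<exists>y. length y = k \<and> x \<in> fiber B y n \<and> fiber B y n \<subseteq> W)))"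

definition definable_topological_group ::
  "('m list set \<Rightarrow> bool) \<Rightarrow> nat \<Rightarrow> 'm list monoid \<Rightarrow> 'm list topology \<Rightarrow> bool" where
  "definable_topological_group S n Gr \<tau> \<longleftrightarrow>
     definable_group S n Gr \<and> topspace \<tau> = carrier Gr \<and> definable_open_base S n \<tau> \<and>
     continuous_map (prod_topology \<tau> \<tau>) \<tau> (\<lambda>(x, y). x \<otimes>\<^bsub>Gr\<^esub> y) \<and>
     continuous_map \<tau> \<tau> (\<lambda>x. inv\<^bsub>Gr\<^esub> x)"

definition definable_nbhd ::
  "('m list set \<Rightarrow> bool) \<Rightarrow> 'm list topology \<Rightarrow> 'm list set \<Rightarrow> 'm list \<Rightarrow> bool" where
  "definable_nbhd S \<tau> A x \<longleftrightarrow>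
     S A \<and> A \<subseteq> topspace \<tau> \<and> (\<exists>W. openin \<tau> W \<and> x \<in> W \<and> W \<subseteq> A)"

definition definably_compact ::
  "('m list set \<Rightarrow> bool) \<Rightarrow> nat \<Rightarrow> 'm list topology \<Rightarrow> 'm list set \<Rightarrow> bool" where
  "definably_compact S n \<tau> C \<longleftrightarrow>
     (\<forall>k Y F. S Y \<longrightarrow> arity k Y \<longrightarrow> Y \<noteq> {} \<longrightarrow> S F \<longrightarrow> arity (k + n) F \<longrightarrow>
        (\<forall>y\<in>Y. fiber F y n \<noteq> {} \<and> closedin (subtopology \<tau> C) (fiber F y n)) \<longrightarrow>
        (\<forall>y1\<in>Y. \<forall>y2\<in>Y. \<exists>y3\<in>Y. fiber F y3 n \<subseteq> fiber F y1 n \<inter> fiber F y2 n) \<longrightarrow>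
        (\<Inter>y\<in>Y. fiber F y n) \<noteq> {})"

text \<open>Open interval (a,b) with a \<in> M and b \<in> M \<union> {+\<infinity>} (None = +\<infinity>).\<close>
definition intv :: "'m::linorder \<Rightarrow> 'm option \<Rightarrow> 'm set" where
  "intv a b = {t. a < t \<and> (case b of None \<Rightarrow> True | Some b' \<Rightarrow> t < b')}"

definition conv_left ::
  "('m list set \<Rightarrow> bool) \<Rightarrow> 'm list topology \<Rightarrow> ('m::linorder \<Rightarrow> 'm list) \<Rightarrow> 'm \<Rightarrow> 'm option \<Rightarrow> 'm list set" where
  "conv_left S \<tau> \<gamma> a b = {x. \<forall>t\<in>intv a b. \<forall>A. definable_nbhd S \<tau> A x \<longrightarrow>
        \<gamma> ` {a<..<t} \<inter> A \<noteq> {}}"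

definition definable_curve_selection ::
  "('m::linorder list set \<Rightarrow> bool) \<Rightarrow> 'm list topology \<Rightarrow> bool" where
  "definable_curve_selection S \<tau> \<longleftrightarrow>
     (\<forall>D x. S D \<longrightarrow> D \<subseteq> topspace \<tau> \<longrightarrow> x \<in> (\<tau> closure_of D) - D \<longrightarrow>
        (\<exists>a b \<gamma>. (case b of None \<Rightarrow> True | Some b' \<Rightarrow> a < b') \<and>
            S {t # \<gamma> t | t. t \<in> intv a b} \<and> \<gamma> ` intv a b \<subseteq> D \<and>
            x \<in> conv_left S \<tau> \<gamma> a b))"

end

theory Submission
  imports Defs
begin

text \<open>
  Fix a definable basis B(y) of the topology and an open W with e \<in> W \<subseteq> U.
  Suppose no basic neighbourhood B(y) of e lies in every conjugate h U h\<inverse>, h \<in> C.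
  Then the sets E(y) of those h \<in> C with B(y) \<not>\<subseteq> h U h\<inverse>, for B(y) \<ni> e, form a
  definable family of nonempty subsets of C which is directed downwards, so by
  definable compactness their closures share a point h.  But continuity of
  (z, g) \<mapsto> z\<inverse> g z at (h, e) yields neighbourhoods N \<ni> h and B(y) \<ni> e with
  z\<inverse> g z \<in> W for all z \<in> N and g \<in> B(y), i.e. N \<inter> E(y) = \<emptyset>: a contradiction.
  Definability of the families involved is checked by writing them as projections
  of Boolean combinations of coordinate preimages of the given definable sets.
\<close>

section \<open>Definable sets of tuples\<close>

definition block :: "nat \<Rightarrow> nat \<Rightarrow> 'a list \<Rightarrow> 'a list" where
  "block p l w = take l (drop p w)"

definition blocks :: "(nat \<times> nat) list \<Rightarrow> 'a list \<Rightarrow> 'a list" where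
  "blocks bs w = concat (map (\<lambda>(p, l). block p l w) bs)"

lemma block_eq_map_nth: "p + l \<le> length w \<Longrightarrow> block p l w = map (\<lambda>i. w ! (p + i)) [0..<l]"
  unfolding block_def by (rule nth_equalityI) auto

lemma block_append_right [simp]: "length a \<le> p \<Longrightarrow> block p l (a @ b) = block (p - length a) l b"
  by (simp add: block_def)

lemma block_prefix [simp]: "length a = l \<Longrightarrow> block 0 l (a @ b) = a"
  by (simp add: block_def)

lemma block_whole [simp]: "length a = l \<Longrightarrow> block 0 l a = a"
  by (simp add: block_def)

lemma blocks_Nil [simp]: "blocks [] w = []"
  and blocks_Cons [simp]: "blocks ((p, l) # bs) w = block p l w @ blocks bs w"
  by (simp_all add: blocks_def)

lemma blocks_eq_map_nth:
  assumes "\<forall>(p, l)\<in>set bs. p + l \<le> N"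
  shows "\<exists>\<pi> m. (\<forall>i<m. \<pi> i < N) \<and>
    (\<forall>w :: 'a list. length w = N \<longrightarrow> blocks bs w = map (\<lambda>i. w ! \<pi> i) [0..<m])"
  using assms
proof (induction bs)
  case Nil
  show ?case by (rule exI[of _ "\<lambda>i. 0"], rule exI[of _ 0]) simp
next
  case (Cons pl bs)
  obtain p l where pl: "pl = (p, l)" by force
  with Cons.prems have le: "p + l \<le> N" and bs: "\<forall>(p, l)\<in>set bs. p + l \<le> N" by auto
  obtain \<pi> m where \<pi>: "\<forall>i<m. \<pi> i < N"
    and eq: "\<forall>w :: 'a list. length w = N \<longrightarrow> blocks bs w = map (\<lambda>i. w ! \<pi> i) [0..<m]"
    using Cons.IH[OF bs] by blast
  define \<pi>' where "\<pi>' i = (if i < l then p + i else \<pi> (i - l))" for i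
  have "\<forall>i<l + m. \<pi>' i < N" using \<pi> le by (auto simp: \<pi>'_def)
  moreover have "\<forall>w :: 'a list. length w = N \<longrightarrow> blocks (pl # bs) w = map (\<lambda>i. w ! \<pi>' i) [0..<l + m]"
  proof (intro allI impI)
    fix w :: "'a list" assume w: "length w = N"
    have "blocks (pl # bs) w = map (\<lambda>i. w ! (p + i)) [0..<l] @ map (\<lambda>i. w ! \<pi> i) [0..<m]"
      using w le eq by (simp add: pl block_eq_map_nth)
    also have "\<dots> = map (\<lambda>i. w ! \<pi>' i) [0..<l + m]"
      by (rule nth_equalityI) (auto simp: nth_append \<pi>'_def)
    finally show "blocks (pl # bs) w = map (\<lambda>i. w ! \<pi>' i) [0..<l + m]" .
  qed
  ultimately show ?case by blast
qed

lemma definable_structureD: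
  assumes "definable_structure addm S"
  shows definable_tuples: "S {x. length x = n}"
    and definable_Diff: "S A \<Longrightarrow> S B \<Longrightarrow> S (A - B)"
    and definable_append: "S A \<Longrightarrow> S B \<Longrightarrow> S {x @ y | x y. x \<in> A \<and> y \<in> B}"
    and definable_take: "S A \<Longrightarrow> S (take m ` A)"
    and definable_diagonal: "i < n \<Longrightarrow> j < n \<Longrightarrow> S {x. length x = n \<and> x ! i = x ! j}"
    and definable_point: "S {[a]}"
  using assms unfolding definable_structure_def by simp_all

lemma definable_Int: "definable_structure addm S \<Longrightarrow> S A \<Longrightarrow> S B \<Longrightarrow> S (A \<inter> B)"
  by (metis Diff_Diff_Int definable_Diff)

lemma definable_conj:
  assumes "definable_structure addm S"
    and "S {w. length w = N \<and> P w}" and "S {w. length w = N \<and> Q w}"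
  shows "S {w. length w = N \<and> P w \<and> Q w}"
proof -
  have "{w. length w = N \<and> P w \<and> Q w} = {w. length w = N \<and> P w} \<inter> {w. length w = N \<and> Q w}"
    by blast
  with definable_Int[OF assms] show ?thesis by simp
qed

lemma definable_neg:
  assumes "definable_structure addm S" and "S {w. length w = N \<and> P w}"
  shows "S {w. length w = N \<and> \<not> P w}"
proof -
  have "{w. length w = N \<and> \<not> P w} = {w. length w = N} - {w. length w = N \<and> P w}"
    by blast
  with definable_Diff[OF assms(1) definable_tuples[OF assms(1)] assms(2)] show ?thesis by simp
qed

lemma definable_ex:
  assumes "definable_structure addm S" and "S {w. length w = N + m \<and> P w}"
  shows "S {v. length v = N \<and> (\<exists>u. length u = m \<and> P (v @ u))}"
proof -
  have "take N ` {w. length w = N + m \<and> P w} = {v. length v = N \<and> (\<exists>u. length u = m \<and> P (v @ u))}"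
  proof (intro Set.set_eqI iffI)
    fix v assume "v \<in> take N ` {w. length w = N + m \<and> P w}"
    then obtain w where "length w = N + m" "P w" "v = take N w" by auto
    then show "v \<in> {v. length v = N \<and> (\<exists>u. length u = m \<and> P (v @ u))}"
      by (auto intro!: exI[of _ "drop N w"])
  next
    fix v assume "v \<in> {v. length v = N \<and> (\<exists>u. length u = m \<and> P (v @ u))}"
    then show "v \<in> take N ` {w. length w = N + m \<and> P w}" by force
  qed
  with definable_take[OF assms, of N] show ?thesis by simp
qed

lemma definable_diagonals:
  assumes "definable_structure addm S" and "\<forall>i<(m::nat). a i < N \<and> b i < N"
  shows "S {w. length w = N \<and> (\<forall>i<m. w ! a i = w ! b i)}"
  using assms(2)
proof (induction m)
  case 0
  show ?case using definable_tuples[OF assms(1)] by simp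
next
  case (Suc m)
  have "S {w. length w = N \<and> (\<forall>i<m. w ! a i = w ! b i) \<and> w ! a m = w ! b m}"
    using Suc by (intro definable_conj[OF assms(1)] definable_diagonal[OF assms(1)]) auto
  moreover have "(\<forall>i<Suc m. w ! a i = w ! b i) \<longleftrightarrow> (\<forall>i<m. w ! a i = w ! b i) \<and> w ! a m = w ! b m"
    for w :: "'a list" by (auto simp: less_Suc_eq)
  ultimately show ?case by simp
qed

lemma definable_preimage_map_nth:
  assumes ds: "definable_structure addm S" and "S B" and \<pi>: "\<forall>i<m. \<pi> i < N"
  shows "S {w. length w = N \<and> map (\<lambda>i. w ! \<pi> i) [0..<m] \<in> B}"
proof -
  let ?P = "{x @ y | x y. x \<in> {w. length w = N} \<and> y \<in> B}"
  let ?D = "{w. length w = N + m \<and> (\<forall>i<m. w ! (N + i) = w ! \<pi> i)}"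
  have "S ?P" by (rule definable_append[OF ds definable_tuples[OF ds] assms(2)])
  moreover have "S ?D" by (rule definable_diagonals[OF ds]) (use \<pi> in auto)
  ultimately have "S (take N ` (?P \<inter> ?D))" by (rule definable_take[OF ds definable_Int[OF ds]])
  moreover have "take N ` (?P \<inter> ?D) = {w. length w = N \<and> map (\<lambda>i. w ! \<pi> i) [0..<m] \<in> B}"
  proof (intro Set.set_eqI iffI)
    fix v assume "v \<in> take N ` (?P \<inter> ?D)"
    then obtain w where w: "w \<in> ?P" "w \<in> ?D" "v = take N w" by blast
    from w(1) obtain x y where xy: "w = x @ y" "length x = N" "y \<in> B" by blast
    have diag: "\<forall>i<m. (x @ y) ! (N + i) = (x @ y) ! \<pi> i" and "length y = m" and "v = x"
      using w(2,3) xy by auto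
    then have "map (\<lambda>i. x ! \<pi> i) [0..<m] = y"
      using xy(2) \<pi> by (intro nth_equalityI) (auto simp: nth_append)
    with xy \<open>v = x\<close> show "v \<in> {w. length w = N \<and> map (\<lambda>i. w ! \<pi> i) [0..<m] \<in> B}" by simp
  next
    fix v assume v: "v \<in> {w. length w = N \<and> map (\<lambda>i. w ! \<pi> i) [0..<m] \<in> B}"
    let ?y = "map (\<lambda>i. v ! \<pi> i) [0..<m]"
    have "v @ ?y \<in> ?P \<inter> ?D" using v \<pi> by (auto simp: nth_append)
    then show "v \<in> take N ` (?P \<inter> ?D)" using v by (auto intro!: image_eqI[of _ _ "v @ ?y"])
  qed
  ultimately show ?thesis by simp
qed

lemma definable_preimage_blocks:
  assumes "definable_structure addm S" and "S B" and "\<forall>(p, l)\<in>set bs. p + l \<le> N"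
  shows "S {w. length w = N \<and> blocks bs w \<in> B}"
proof -
  obtain \<pi> m where \<pi>: "\<forall>i<m. \<pi> i < N"
    and eq: "\<forall>w :: 'a list. length w = N \<longrightarrow> blocks bs w = map (\<lambda>i. w ! \<pi> i) [0..<m]"
    using blocks_eq_map_nth[OF assms(3)] by blast
  have "{w. length w = N \<and> blocks bs w \<in> B} = {w. length w = N \<and> map (\<lambda>i. w ! \<pi> i) [0..<m] \<in> B}"
    by (rule Collect_cong) (metis eq)
  then show ?thesis using definable_preimage_map_nth[OF assms(1,2) \<pi>] by (simp only:)
qed

lemma definable_singleton:
  assumes "definable_structure addm S"
  shows "S {x}"
proof (induction x)
  case Nil
  have "{w. length w = 0} = {[]}" by auto
  with definable_tuples[OF assms, of 0] show ?case by simp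
next
  case (Cons a x)
  have "{u @ v | u v. u \<in> {[a]} \<and> v \<in> {x}} = {a # x}" by auto
  with definable_append[OF assms definable_point[OF assms] Cons] show ?case by simp
qed

lemma mem_fiber: "x \<in> fiber F y n \<longleftrightarrow> length x = n \<and> y @ x \<in> F"
  by (simp add: fiber_def)

definition family_graph :: "nat \<Rightarrow> ('a list \<Rightarrow> 'a list set) \<Rightarrow> 'a list set" where
  "family_graph k F = {y @ x | y x. length y = k \<and> x \<in> F y}"

lemma append_mem_family_graph: "length y = k \<Longrightarrow> y @ x \<in> family_graph k F \<longleftrightarrow> x \<in> F y"
  by (auto simp: family_graph_def append_eq_append_conv)

lemma append_mem_pairs_iff:
  assumes "arity n A" and "length h = n"
  shows "h @ g \<in> {h' @ g' | h' g'. h' \<in> A \<and> P h' g'} \<longleftrightarrow> h \<in> A \<and> P h g"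
  using assms by (auto simp: arity_def append_eq_append_conv)

lemma family_graph_Int: "family_graph k (\<lambda>y. F y \<inter> G y) = family_graph k F \<inter> family_graph k G"
proof (intro Set.set_eqI iffI)
  fix w assume "w \<in> family_graph k F \<inter> family_graph k G"
  then obtain y x where "w = y @ x" "length y = k" "x \<in> F y" "y @ x \<in> family_graph k G"
    unfolding family_graph_def by blast
  then show "w \<in> family_graph k (\<lambda>y. F y \<inter> G y)"
    by (simp add: append_mem_family_graph)
qed (auto simp: family_graph_def)

lemma fiber_family_graph:
  assumes "length y = k" and "\<And>x. x \<in> F y \<Longrightarrow> length x = n"
  shows "fiber (family_graph k F) y n = F y"
  using assms by (auto simp: fiber_def append_mem_family_graph)

lemma arity_family_graph:
  assumes "\<And>y x. x \<in> F y \<Longrightarrow> length x = n"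
  shows "arity (k + n) (family_graph k F)"
  using assms by (auto simp: arity_def family_graph_def)

lemma definable_append_pairs:
  assumes "S {w. length w = j + n \<and> Q w}"
    and "\<And>y x. length y = j \<Longrightarrow> length x = n \<Longrightarrow> Q (y @ x) \<longleftrightarrow> P y x"
  shows "S {y @ x | y x. length y = j \<and> length x = n \<and> P y x}"
proof -
  have "{w. length w = j + n \<and> Q w} = {y @ x | y x. length y = j \<and> length x = n \<and> P y x}"
  proof (intro Set.set_eqI iffI)
    fix w assume w: "w \<in> {w. length w = j + n \<and> Q w}"
    then have "w = take j w @ drop j w" "length (take j w) = j" "length (drop j w) = n"
      and "P (take j w) (drop j w)"
      using assms(2)[of "take j w" "drop j w"] by auto
    then show "w \<in> {y @ x | y x. length y = j \<and> length x = n \<and> P y x}" by blast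
  next
    fix w assume "w \<in> {y @ x | y x. length y = j \<and> length x = n \<and> P y x}"
    then obtain y x where "w = y @ x" "length y = j" "length x = n" "P y x" by blast
    with assms(2) show "w \<in> {w. length w = j + n \<and> Q w}" by simp
  qed
  with assms(1) show ?thesis by simp
qed

lemma definable_fiber_indices:
  assumes ds: "definable_structure addm S" and "S B"
  shows "S {y. length y = k \<and> e \<in> fiber B y n}"
proof -
  have "S {w. length w = k + n \<and> blocks [(0, k + n)] w \<in> B \<and> blocks [(k, n)] w \<in> {e}}"
    using \<open>S B\<close> definable_singleton[OF ds]
    by (intro definable_conj[OF ds] definable_preimage_blocks[OF ds]) auto
  then have "S {y. length y = k \<and> (\<exists>x. length x = n \<and>
      blocks [(0, k + n)] (y @ x) \<in> B \<and> blocks [(k, n)] (y @ x) \<in> {e})}"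
    by (rule definable_ex[OF ds])
  moreover have "{y. length y = k \<and> (\<exists>x. length x = n \<and>
      blocks [(0, k + n)] (y @ x) \<in> B \<and> blocks [(k, n)] (y @ x) \<in> {e})} =
      {y. length y = k \<and> e \<in> fiber B y n}"
    by (auto simp: mem_fiber)
  ultimately show ?thesis
    by simp
qed

section \<open>Closures and definable compactness\<close>

lemma in_closure_of_base:
  assumes V_open: "\<And>i. P i \<Longrightarrow> openin X (V i)"
    and V_base: "\<And>W x. openin X W \<Longrightarrow> x \<in> W \<Longrightarrow> \<exists>i. P i \<and> x \<in> V i \<and> V i \<subseteq> W"
  shows "x \<in> X closure_of A \<longleftrightarrow> (\<exists>i. P i \<and> x \<in> V i) \<and> (\<forall>i. P i \<longrightarrow> x \<in> V i \<longrightarrow> V i \<inter> A \<noteq> {})"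
proof
  assume x: "x \<in> X closure_of A"
  have "\<exists>i. P i \<and> x \<in> V i"
    using V_base[OF openin_topspace closure_of_subset_topspace[THEN subsetD, OF x]] by blast
  moreover have "V i \<inter> A \<noteq> {}" if "P i" "x \<in> V i" for i
    using x V_open[OF that(1)] that(2) by (auto simp: in_closure_of)
  ultimately show "(\<exists>i. P i \<and> x \<in> V i) \<and> (\<forall>i. P i \<longrightarrow> x \<in> V i \<longrightarrow> V i \<inter> A \<noteq> {})"
    by blast
next
  assume x: "(\<exists>i. P i \<and> x \<in> V i) \<and> (\<forall>i. P i \<longrightarrow> x \<in> V i \<longrightarrow> V i \<inter> A \<noteq> {})"
  then have "x \<in> topspace X"
    using V_open openin_subset by blast
  moreover have "\<exists>y. y \<in> A \<and> y \<in> T" if T: "x \<in> T" "openin X T" for T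
  proof -
    obtain i where "P i" "x \<in> V i" "V i \<subseteq> T" using V_base[OF T(2,1)] by blast
    with x show ?thesis by blast
  qed
  ultimately show "x \<in> X closure_of A"
    by (auto simp: in_closure_of)
qed

lemma definable_open_base_length:
  assumes "definable_open_base S n \<tau>" and "x \<in> topspace \<tau>"
  shows "length x = n"
  using assms openin_topspace unfolding definable_open_base_def fiber_def by blast

lemma in_closure_of_fiber_base_iff:
  assumes B_open: "\<And>y. length y = k \<Longrightarrow> openin \<tau> (fiber B y n)"
    and B_base: "\<And>W x. openin \<tau> W \<Longrightarrow> x \<in> W \<Longrightarrow> \<exists>y. length y = k \<and> x \<in> fiber B y n \<and> fiber B y n \<subseteq> W"
    and "length x = n"
  shows "x \<in> \<tau> closure_of A \<longleftrightarrow> (\<exists>y. length y = k \<and> y @ x \<in> B) \<and>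
    \<not> (\<exists>y. length y = k \<and> y @ x \<in> B \<and> \<not> (\<exists>h. length h = n \<and> y @ h \<in> B \<and> h \<in> A))"
proof -
  have "x \<in> \<tau> closure_of A \<longleftrightarrow> (\<exists>y. length y = k \<and> x \<in> fiber B y n) \<and>
      (\<forall>y. length y = k \<longrightarrow> x \<in> fiber B y n \<longrightarrow> fiber B y n \<inter> A \<noteq> {})"
    by (rule in_closure_of_base[OF B_open B_base])
  with \<open>length x = n\<close> show ?thesis
    unfolding fiber_def by blast
qed

lemma definable_closure_family:
  fixes F :: "'a::linorder list \<Rightarrow> 'a list set"
  assumes ds: "definable_structure addm S" and base: "definable_open_base S n \<tau>"
    and "S (family_graph j F)"
  shows "S (family_graph j (\<lambda>y. \<tau> closure_of F y))"
proof -
  obtain k B where B_open: "\<And>y. length y = k \<Longrightarrow> openin \<tau> (fiber B y n)" and "S B"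
    and B_base: "\<And>W x. openin \<tau> W \<Longrightarrow> x \<in> W \<Longrightarrow> \<exists>y. length y = k \<and> x \<in> fiber B y n \<and> fiber B y n \<subseteq> W"
    using base unfolding definable_open_base_def by blast
  have closure_length: "length x = n" if "x \<in> \<tau> closure_of A" for x A
    by (rule definable_open_base_length[OF base closure_of_subset_topspace[THEN subsetD, OF that]])
  define E where "E = family_graph j F"
  \<comment> \<open>Tuples are laid out as y @ x @ y' @ h: x is a candidate point of the closure of F y,
    B y' a basic neighbourhood of x and h a point of B y' \<inter> F y.\<close>
  define Meets where "Meets w \<longleftrightarrow>
      blocks [(j+n, k), (j+n+k, n)] w \<in> B \<and> blocks [(0, j), (j+n+k, n)] w \<in> E" for w :: "'a list"
  define Misses where "Misses w \<longleftrightarrow>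
      blocks [(j+n, k), (j, n)] w \<in> B \<and> \<not> (\<exists>h. length h = n \<and> Meets (w @ h))" for w :: "'a list"
  define In_closure where "In_closure w \<longleftrightarrow>
      (\<exists>y'. length y' = k \<and> blocks [(j+n, k), (j, n)] (w @ y') \<in> B) \<and>
      \<not> (\<exists>y'. length y' = k \<and> Misses (w @ y'))" for w :: "'a list"
  have "S E"
    unfolding E_def by fact
  then have "S {w. length w = j + n + k + n \<and> Meets w}"
    unfolding Meets_def using \<open>S B\<close>
    by (intro definable_conj[OF ds] definable_preimage_blocks[OF ds]) auto
  then have "S {w. length w = j + n + k \<and> Misses w}"
    unfolding Misses_def using \<open>S B\<close>
    by (intro definable_conj[OF ds] definable_preimage_blocks[OF ds] definable_neg[OF ds]
        definable_ex[OF ds]) auto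
  then have "S {w. length w = j + n \<and> In_closure w}"
    unfolding In_closure_def using \<open>S B\<close>
    by (intro definable_conj[OF ds] definable_neg[OF ds] definable_ex[OF ds]
        definable_preimage_blocks[OF ds]) auto
  then have "S {y @ x | y x. length y = j \<and> length x = n \<and> x \<in> \<tau> closure_of F y}"
    by (rule definable_append_pairs)
      (simp add: In_closure_def Misses_def Meets_def in_closure_of_fiber_base_iff[OF B_open B_base]
        E_def append_mem_family_graph cong: conj_cong)
  moreover have "{y @ x | y x. length y = j \<and> length x = n \<and> x \<in> \<tau> closure_of F y} =
      family_graph j (\<lambda>y. \<tau> closure_of F y)"
    unfolding family_graph_def using closure_length by blast
  ultimately show ?thesis
    by simp
qed

lemma definably_compact_family_graph:
  assumes compact: "definably_compact S n \<tau> C" and "S Y" and "arity k Y" and "Y \<noteq> {}"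
    and "S (family_graph k F)" and F_length: "\<And>y x. x \<in> F y \<Longrightarrow> length x = n"
    and closed: "\<And>y. y \<in> Y \<Longrightarrow> F y \<noteq> {} \<and> closedin (subtopology \<tau> C) (F y)"
    and directed: "\<And>y1 y2. y1 \<in> Y \<Longrightarrow> y2 \<in> Y \<Longrightarrow> \<exists>y3\<in>Y. F y3 \<subseteq> F y1 \<inter> F y2"
  shows "(\<Inter>y\<in>Y. F y) \<noteq> {}"
proof -
  let ?K = "family_graph k F"
  have fiber: "fiber ?K y n = F y" if "y \<in> Y" for y
    using \<open>arity k Y\<close> that F_length by (intro fiber_family_graph) (auto simp: arity_def)
  have "arity (k + n) ?K"
    using F_length by (rule arity_family_graph)
  moreover have "\<forall>y\<in>Y. fiber ?K y n \<noteq> {} \<and> closedin (subtopology \<tau> C) (fiber ?K y n)"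
    using closed fiber by simp
  moreover have "\<forall>y1\<in>Y. \<forall>y2\<in>Y. \<exists>y3\<in>Y. fiber ?K y3 n \<subseteq> fiber ?K y1 n \<inter> fiber ?K y2 n"
  proof (intro ballI)
    fix y1 y2 assume "y1 \<in> Y" and "y2 \<in> Y"
    with directed obtain y3 where "y3 \<in> Y" and "F y3 \<subseteq> F y1 \<inter> F y2"
      by blast
    with \<open>y1 \<in> Y\<close> \<open>y2 \<in> Y\<close> show "\<exists>y3\<in>Y. fiber ?K y3 n \<subseteq> fiber ?K y1 n \<inter> fiber ?K y2 n"
      by (intro bexI[of _ y3]) (simp_all add: fiber)
  qed
  ultimately have "(\<Inter>y\<in>Y. fiber ?K y n) \<noteq> {}"
    using compact[unfolded definably_compact_def, THEN spec[of _ k], THEN spec[of _ Y], THEN spec[of _ ?K]]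
      assms(2-5) by blast
  moreover have "(\<Inter>y\<in>Y. fiber ?K y n) = (\<Inter>y\<in>Y. F y)"
    using fiber by simp
  ultimately show ?thesis
    by simp
qed

lemma definably_compact_cluster_point:
  fixes F :: "'a::linorder list \<Rightarrow> 'a list set"
  assumes ds: "definable_structure addm S" and base: "definable_open_base S n \<tau>"
    and compact: "definably_compact S n \<tau> C" and "S C" and C_top: "C \<subseteq> topspace \<tau>"
    and "S Y" and "arity k Y" and "Y \<noteq> {}" and SF: "S (family_graph k F)"
    and sub: "\<And>y. y \<in> Y \<Longrightarrow> F y \<subseteq> C"
    and nonempty: "\<And>y. y \<in> Y \<Longrightarrow> F y \<noteq> {}"
    and directed: "\<And>y1 y2. y1 \<in> Y \<Longrightarrow> y2 \<in> Y \<Longrightarrow> \<exists>y3\<in>Y. F y3 \<subseteq> F y1 \<inter> F y2"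
  shows "\<exists>h\<in>C. \<forall>y\<in>Y. h \<in> \<tau> closure_of F y"
proof -
  have "(\<Inter>y\<in>Y. C \<inter> \<tau> closure_of F y) \<noteq> {}"
  proof (rule definably_compact_family_graph[OF compact \<open>S Y\<close> \<open>arity k Y\<close> \<open>Y \<noteq> {}\<close>])
    have "S (family_graph k (\<lambda>_. C))"
      using definable_append[OF ds definable_tuples[OF ds] \<open>S C\<close>] by (simp add: family_graph_def)
    then show "S (family_graph k (\<lambda>y. C \<inter> \<tau> closure_of F y))"
      unfolding family_graph_Int by (rule definable_Int[OF ds _ definable_closure_family[OF ds base SF]])
    show "length x = n" if "x \<in> C \<inter> \<tau> closure_of F y" for y x
      using that C_top definable_open_base_length[OF base] by blast
    show "C \<inter> \<tau> closure_of F y \<noteq> {} \<and> closedin (subtopology \<tau> C) (C \<inter> \<tau> closure_of F y)"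
      if "y \<in> Y" for y
    proof
      have "F y \<subseteq> \<tau> closure_of F y"
        by (rule closure_of_subset) (use sub[OF that] C_top in blast)
      with sub[OF that] nonempty[OF that] show "C \<inter> \<tau> closure_of F y \<noteq> {}"
        by blast
    qed (simp add: closedin_subtopology_Int_closed)
    show "\<exists>y3\<in>Y. C \<inter> \<tau> closure_of F y3 \<subseteq> (C \<inter> \<tau> closure_of F y1) \<inter> (C \<inter> \<tau> closure_of F y2)"
      if "y1 \<in> Y" and "y2 \<in> Y" for y1 y2
      using directed[OF that] closure_of_mono by (meson Int_mono le_inf_iff order_refl)
  qed
  with \<open>Y \<noteq> {}\<close> show ?thesis
    by blast
qed

lemma definably_compact_cluster_point_at:
  fixes F :: "'a::linorder list \<Rightarrow> 'a list set"
  assumes ds: "definable_structure addm S" and base: "definable_open_base S n \<tau>"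
    and compact: "definably_compact S n \<tau> C" and "S C" and C_top: "C \<subseteq> topspace \<tau>"
    and "S B" and B_open: "\<And>y. length y = k \<Longrightarrow> openin \<tau> (fiber B y n)"
    and B_base: "\<And>W x. openin \<tau> W \<Longrightarrow> x \<in> W \<Longrightarrow> \<exists>y. length y = k \<and> x \<in> fiber B y n \<and> fiber B y n \<subseteq> W"
    and "x \<in> topspace \<tau>" and SF: "S (family_graph k F)"
    and mono: "\<And>y y'. fiber B y n \<subseteq> fiber B y' n \<Longrightarrow> F y \<subseteq> F y'"
    and sub: "\<And>y. F y \<subseteq> C"
    and nonempty: "\<And>y. length y = k \<Longrightarrow> x \<in> fiber B y n \<Longrightarrow> F y \<noteq> {}"
  obtains h where "h \<in> C" and "\<And>y. length y = k \<Longrightarrow> x \<in> fiber B y n \<Longrightarrow> h \<in> \<tau> closure_of F y"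
proof -
  define Y where "Y = {y. length y = k \<and> x \<in> fiber B y n}"
  have "\<exists>h\<in>C. \<forall>y\<in>Y. h \<in> \<tau> closure_of F y"
  proof (rule definably_compact_cluster_point[OF ds base compact \<open>S C\<close> C_top _ _ _ SF])
    show "S Y"
      unfolding Y_def using ds \<open>S B\<close> by (rule definable_fiber_indices)
    show "arity k Y"
      by (simp add: Y_def arity_def)
    show "Y \<noteq> {}"
      using B_base[OF openin_topspace \<open>x \<in> topspace \<tau>\<close>] unfolding Y_def by blast
    show "F y \<subseteq> C" for y
      by (rule sub)
    show "F y \<noteq> {}" if "y \<in> Y" for y
      using nonempty that unfolding Y_def by blast
    show "\<exists>y3\<in>Y. F y3 \<subseteq> F y1 \<inter> F y2" if y12: "y1 \<in> Y" "y2 \<in> Y" for y1 y2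
    proof -
      have "openin \<tau> (fiber B y1 n \<inter> fiber B y2 n)" and "x \<in> fiber B y1 n \<inter> fiber B y2 n"
        using y12 B_open by (auto simp: Y_def)
      then obtain y3 where "length y3 = k" "x \<in> fiber B y3 n"
        and "fiber B y3 n \<subseteq> fiber B y1 n" "fiber B y3 n \<subseteq> fiber B y2 n"
        using B_base by (metis le_inf_iff)
      then show ?thesis
        using mono unfolding Y_def by blast
    qed
  qed
  then obtain h where h: "h \<in> C" "\<forall>y\<in>Y. h \<in> \<tau> closure_of F y"
    by blast
  show ?thesis
    by (rule that[OF h(1)]) (use h(2) in \<open>simp add: Y_def\<close>)
qed

section \<open>Definable groups\<close>

lemma definable_group_length: "definable_group S n Gr \<Longrightarrow> x \<in> carrier Gr \<Longrightarrow> length x = n"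
  by (simp add: definable_group_def arity_def)

lemma definable_group_mul_graph_iff:
  assumes G: "definable_group S n Gr" and "length a = n" and "length b = n"
  shows "a @ b @ c \<in> {x @ y @ (x \<otimes>\<^bsub>Gr\<^esub> y) | x y. x \<in> carrier Gr \<and> y \<in> carrier Gr} \<longleftrightarrow>
    a \<in> carrier Gr \<and> b \<in> carrier Gr \<and> c = a \<otimes>\<^bsub>Gr\<^esub> b"
proof
  assume "a @ b @ c \<in> {x @ y @ (x \<otimes>\<^bsub>Gr\<^esub> y) | x y. x \<in> carrier Gr \<and> y \<in> carrier Gr}"
  then obtain x y where xy: "a @ b @ c = x @ y @ (x \<otimes>\<^bsub>Gr\<^esub> y)" "x \<in> carrier Gr" "y \<in> carrier Gr"
    by blast
  then have "a = x" and "b @ c = y @ (x \<otimes>\<^bsub>Gr\<^esub> y)"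
    using assms(2) definable_group_length[OF G xy(2)] by (simp_all add: append_eq_append_conv)
  moreover from this have "b = y" and "c = x \<otimes>\<^bsub>Gr\<^esub> y"
    using assms(3) definable_group_length[OF G xy(3)] by (simp_all add: append_eq_append_conv)
  ultimately show "a \<in> carrier Gr \<and> b \<in> carrier Gr \<and> c = a \<otimes>\<^bsub>Gr\<^esub> b"
    using xy by simp
qed blast

lemma definable_group_inv_graph_iff:
  assumes G: "definable_group S n Gr" and "length a = n"
  shows "a @ b \<in> {x @ inv\<^bsub>Gr\<^esub> x | x. x \<in> carrier Gr} \<longleftrightarrow> a \<in> carrier Gr \<and> b = inv\<^bsub>Gr\<^esub> a"
proof
  assume "a @ b \<in> {x @ inv\<^bsub>Gr\<^esub> x | x. x \<in> carrier Gr}"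
  then obtain x where x: "a @ b = x @ inv\<^bsub>Gr\<^esub> x" "x \<in> carrier Gr"
    by blast
  then show "a \<in> carrier Gr \<and> b = inv\<^bsub>Gr\<^esub> a"
    using assms(2) definable_group_length[OF G x(2)] by (simp add: append_eq_append_conv)
qed blast

lemma definable_conjugation_preimage:
  fixes S :: "'a::linorder list set \<Rightarrow> bool"
  assumes ds: "definable_structure addm S" and G: "definable_group S n Gr" and "S U"
  shows "S {h @ g | h g. h \<in> carrier Gr \<and> g \<in> carrier Gr \<and> inv\<^bsub>Gr\<^esub> h \<otimes>\<^bsub>Gr\<^esub> g \<otimes>\<^bsub>Gr\<^esub> h \<in> U}"
proof -
  interpret G: group Gr
    using G by (simp add: definable_group_def)
  define Mul where "Mul = {x @ y @ (x \<otimes>\<^bsub>Gr\<^esub> y) | x y. x \<in> carrier Gr \<and> y \<in> carrier Gr}"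
  define Inv where "Inv = {x @ inv\<^bsub>Gr\<^esub> x | x. x \<in> carrier Gr}"
  have "S Mul" and "S Inv"
    using G by (simp_all add: definable_group_def Mul_def Inv_def)
  have Mul_iff: "a @ b @ c \<in> Mul \<longleftrightarrow> a \<in> carrier Gr \<and> b \<in> carrier Gr \<and> c = a \<otimes>\<^bsub>Gr\<^esub> b"
    if "length a = n" "length b = n" for a b c
    unfolding Mul_def using G that by (rule definable_group_mul_graph_iff)
  have Inv_iff: "a @ b \<in> Inv \<longleftrightarrow> a \<in> carrier Gr \<and> b = inv\<^bsub>Gr\<^esub> a" if "length a = n" for a b
    unfolding Inv_def using G that by (rule definable_group_inv_graph_iff)
  \<comment> \<open>Tuples are laid out as h @ g @ a @ b @ c with a = h\<inverse>, b = a g and c = b h.\<close>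
  define P where "P w \<longleftrightarrow> blocks [(0, n), (2*n, n)] w \<in> Inv \<and> blocks [(2*n, n), (n, n), (3*n, n)] w \<in> Mul \<and>
      blocks [(3*n, n), (0, n), (4*n, n)] w \<in> Mul \<and> blocks [(4*n, n)] w \<in> U" for w :: "'a list"
  have "S {w. length w = n + n + n + n + n \<and> P w}"
    unfolding P_def using \<open>S Mul\<close> \<open>S Inv\<close> \<open>S U\<close>
    by (intro definable_conj[OF ds] definable_preimage_blocks[OF ds]) auto
  then have "S {w. length w = n + n \<and> (\<exists>a. length a = n \<and> (\<exists>b. length b = n \<and>
      (\<exists>c. length c = n \<and> P (((w @ a) @ b) @ c))))}"
    by (intro definable_ex[OF ds])
  then have "S {h @ g | h g. length h = n \<and> length g = n \<and>
      h \<in> carrier Gr \<and> g \<in> carrier Gr \<and> inv\<^bsub>Gr\<^esub> h \<otimes>\<^bsub>Gr\<^esub> g \<otimes>\<^bsub>Gr\<^esub> h \<in> U}"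
  proof (rule definable_append_pairs)
    fix h g :: "'a list" assume h: "length h = n" and g: "length g = n"
    have P_iff: "P (h @ g @ a @ b @ c) \<longleftrightarrow> h \<in> carrier Gr \<and> g \<in> carrier Gr \<and>
        a = inv\<^bsub>Gr\<^esub> h \<and> b = a \<otimes>\<^bsub>Gr\<^esub> g \<and> c = b \<otimes>\<^bsub>Gr\<^esub> h \<and> c \<in> U"
      if "length a = n" "length b = n" "length c = n" for a b c
      using h g that by (auto simp: P_def Mul_iff Inv_iff)
    show "(\<exists>a. length a = n \<and> (\<exists>b. length b = n \<and> (\<exists>c. length c = n \<and> P ((((h @ g) @ a) @ b) @ c)))) \<longleftrightarrow>
        h \<in> carrier Gr \<and> g \<in> carrier Gr \<and> inv\<^bsub>Gr\<^esub> h \<otimes>\<^bsub>Gr\<^esub> g \<otimes>\<^bsub>Gr\<^esub> h \<in> U"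
    proof
      assume "h \<in> carrier Gr \<and> g \<in> carrier Gr \<and> inv\<^bsub>Gr\<^esub> h \<otimes>\<^bsub>Gr\<^esub> g \<otimes>\<^bsub>Gr\<^esub> h \<in> U"
      then show "\<exists>a. length a = n \<and> (\<exists>b. length b = n \<and> (\<exists>c. length c = n \<and> P ((((h @ g) @ a) @ b) @ c)))"
        using P_iff definable_group_length[OF G]
        by (intro conjI exI[of _ "inv\<^bsub>Gr\<^esub> h"] exI[of _ "inv\<^bsub>Gr\<^esub> h \<otimes>\<^bsub>Gr\<^esub> g"]
            exI[of _ "inv\<^bsub>Gr\<^esub> h \<otimes>\<^bsub>Gr\<^esub> g \<otimes>\<^bsub>Gr\<^esub> h"]) auto
    qed (use P_iff in auto)
  qed
  moreover have "{h @ g | h g. length h = n \<and> length g = n \<and>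
      h \<in> carrier Gr \<and> g \<in> carrier Gr \<and> inv\<^bsub>Gr\<^esub> h \<otimes>\<^bsub>Gr\<^esub> g \<otimes>\<^bsub>Gr\<^esub> h \<in> U} =
      {h @ g | h g. h \<in> carrier Gr \<and> g \<in> carrier Gr \<and> inv\<^bsub>Gr\<^esub> h \<otimes>\<^bsub>Gr\<^esub> g \<otimes>\<^bsub>Gr\<^esub> h \<in> U}"
    using definable_group_length[OF G] by blast
  ultimately show ?thesis
    by simp
qed

definition bad_conjugators :: "('a, 'b) monoid_scheme \<Rightarrow> 'a set \<Rightarrow> 'a set \<Rightarrow> 'a set \<Rightarrow> 'a set" where
  "bad_conjugators G U C V = {h \<in> C. \<exists>g\<in>V. inv\<^bsub>G\<^esub> h \<otimes>\<^bsub>G\<^esub> g \<otimes>\<^bsub>G\<^esub> h \<notin> U}"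

lemma bad_conjugators_mono: "V \<subseteq> V' \<Longrightarrow> bad_conjugators G U C V \<subseteq> bad_conjugators G U C V'"
  unfolding bad_conjugators_def by blast

lemma bad_conjugators_subset: "bad_conjugators G U C V \<subseteq> C"
  unfolding bad_conjugators_def by blast

lemma definable_bad_conjugators:
  fixes S :: "'a::linorder list set \<Rightarrow> bool"
  assumes ds: "definable_structure addm S" and G: "definable_group S n Gr"
    and "S U" and "S B" and "S C" and C_carrier: "C \<subseteq> carrier Gr"
    and B_carrier: "\<And>y. length y = k \<Longrightarrow> fiber B y n \<subseteq> carrier Gr"
  shows "S (family_graph k (\<lambda>y. bad_conjugators Gr U C (fiber B y n)))"
proof -
  define Conj where "Conj = {h @ g | h g. h \<in> carrier Gr \<and> g \<in> carrier Gr \<and>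
      inv\<^bsub>Gr\<^esub> h \<otimes>\<^bsub>Gr\<^esub> g \<otimes>\<^bsub>Gr\<^esub> h \<in> U}"
  have "S Conj"
    unfolding Conj_def using ds G \<open>S U\<close> by (rule definable_conjugation_preimage)
  have carrier_arity: "arity n (carrier Gr)"
    using G by (simp add: definable_group_def)
  have Conj_iff: "h @ g \<in> Conj \<longleftrightarrow> inv\<^bsub>Gr\<^esub> h \<otimes>\<^bsub>Gr\<^esub> g \<otimes>\<^bsub>Gr\<^esub> h \<in> U"
    if "h \<in> carrier Gr" and "g \<in> carrier Gr" for h g
    unfolding Conj_def append_mem_pairs_iff[OF carrier_arity definable_group_length[OF G that(1)]]
    using that by simp
  define Witness where "Witness w \<longleftrightarrow> blocks [(k, n)] w \<in> C \<and> blocks [(0, k), (k + n, n)] w \<in> B \<and>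
      blocks [(k, n), (k + n, n)] w \<notin> Conj" for w :: "'a list"
  have "S {w. length w = k + n + n \<and> Witness w}"
    unfolding Witness_def using \<open>S C\<close> \<open>S B\<close> \<open>S Conj\<close>
    by (intro definable_conj[OF ds] definable_neg[OF ds] definable_preimage_blocks[OF ds]) auto
  then have "S {v. length v = k + n \<and> (\<exists>g. length g = n \<and> Witness (v @ g))}"
    by (rule definable_ex[OF ds])
  then have "S {y @ h | y h. length y = k \<and> length h = n \<and> h \<in> bad_conjugators Gr U C (fiber B y n)}"
  proof (rule definable_append_pairs)
    fix y h :: "'a list" assume y: "length y = k" and h: "length h = n"
    have "Witness ((y @ h) @ g) \<longleftrightarrow> h \<in> C \<and> y @ g \<in> B \<and> h @ g \<notin> Conj" if "length g = n" for g
      using y h that by (simp add: Witness_def)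
    moreover have "h @ g \<notin> Conj \<longleftrightarrow> inv\<^bsub>Gr\<^esub> h \<otimes>\<^bsub>Gr\<^esub> g \<otimes>\<^bsub>Gr\<^esub> h \<notin> U"
      if "h \<in> C" "g \<in> fiber B y n" for g
      using Conj_iff that C_carrier B_carrier[OF y] by blast
    ultimately show "(\<exists>g. length g = n \<and> Witness ((y @ h) @ g)) \<longleftrightarrow> h \<in> bad_conjugators Gr U C (fiber B y n)"
      unfolding bad_conjugators_def mem_Collect_eq Bex_def mem_fiber by blast
  qed
  moreover have "length h = n" if "h \<in> bad_conjugators Gr U C V" for h V
    using that bad_conjugators_subset[of Gr U C V] C_carrier definable_group_length[OF G] by blast
  then have "{y @ h | y h. length y = k \<and> length h = n \<and> h \<in> bad_conjugators Gr U C (fiber B y n)} =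
      family_graph k (\<lambda>y. bad_conjugators Gr U C (fiber B y n))"
    unfolding family_graph_def by blast
  ultimately show ?thesis
    by simp
qed

section \<open>Conjugation in topological groups\<close>

lemma (in group) conjugate_memI:
  assumes "h \<in> carrier G" and "g \<in> carrier G" and "inv h \<otimes> g \<otimes> h \<in> U"
  shows "g \<in> {h \<otimes> u \<otimes> inv h | u. u \<in> U}"
proof -
  have "h \<otimes> (inv h \<otimes> g \<otimes> h) \<otimes> inv h = g"
    using assms(1,2) by (simp flip: m_assoc) (simp add: m_assoc)
  with assms(3) show ?thesis by force
qed

lemma (in group) conjugates_nbhd_if_no_bad_conjugators:
  assumes "openin \<tau> V" and "\<one> \<in> V" and "bad_conjugators G U C V = {}"
    and "C \<subseteq> carrier G" and "V \<subseteq> carrier G"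
  shows "\<exists>W. openin \<tau> W \<and> \<one> \<in> W \<and> W \<subseteq> (\<Inter>h\<in>C. {h \<otimes> u \<otimes> inv h | u. u \<in> U})"
proof (intro exI conjI)
  show "V \<subseteq> (\<Inter>h\<in>C. {h \<otimes> u \<otimes> inv h | u. u \<in> U})"
  proof (intro subsetI INT_I)
    fix g h assume "g \<in> V" and "h \<in> C"
    with assms(3) have "inv h \<otimes> g \<otimes> h \<in> U"
      unfolding bad_conjugators_def by blast
    with \<open>g \<in> V\<close> \<open>h \<in> C\<close> assms(4,5) show "g \<in> {h \<otimes> u \<otimes> inv h | u. u \<in> U}"
      by (intro conjugate_memI) auto
  qed
qed (use assms(1,2) in auto)

lemma (in group) conjugation_locally_uniform:
  assumes top: "topspace \<tau> = carrier G"
    and mul: "continuous_map (prod_topology \<tau> \<tau>) \<tau> (\<lambda>(x, y). x \<otimes> y)"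
    and inv: "continuous_map \<tau> \<tau> (\<lambda>x. inv x)"
    and "openin \<tau> W" and "\<one> \<in> W" and "h \<in> carrier G"
  obtains N V where "openin \<tau> N" and "h \<in> N" and "openin \<tau> V" and "\<one> \<in> V"
    and "\<And>z g. z \<in> N \<Longrightarrow> g \<in> V \<Longrightarrow> inv z \<otimes> g \<otimes> z \<in> W"
proof -
  define \<phi> where "\<phi> p = inv (fst p) \<otimes> snd p \<otimes> fst p" for p
  have inv_fst: "continuous_map (prod_topology \<tau> \<tau>) \<tau> (\<lambda>p. inv (fst p))"
    using continuous_map_compose[OF continuous_map_fst inv] by (simp add: o_def)
  have inv_fst_snd: "continuous_map (prod_topology \<tau> \<tau>) \<tau> (\<lambda>p. inv (fst p) \<otimes> snd p)"
    using continuous_map_compose[OF continuous_map_pairedI[OF inv_fst continuous_map_snd] mul]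
    by (simp add: o_def)
  have \<phi>_cont: "continuous_map (prod_topology \<tau> \<tau>) \<tau> \<phi>"
    unfolding \<phi>_def
    using continuous_map_compose[OF continuous_map_pairedI[OF inv_fst_snd continuous_map_fst] mul]
    by (simp add: o_def)
  define P where "P = {p \<in> topspace (prod_topology \<tau> \<tau>). \<phi> p \<in> W}"
  have "openin (prod_topology \<tau> \<tau>) P"
    unfolding P_def using \<phi>_cont \<open>openin \<tau> W\<close> by (rule openin_continuous_map_preimage)
  moreover have "(h, \<one>) \<in> P"
    using \<open>h \<in> carrier G\<close> \<open>\<one> \<in> W\<close> top by (simp add: P_def \<phi>_def)
  ultimately have "\<exists>N V. openin \<tau> N \<and> openin \<tau> V \<and> h \<in> N \<and> \<one> \<in> V \<and> N \<times> V \<subseteq> P"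
    by (simp add: openin_prod_topology_alt)
  then obtain N V where N: "openin \<tau> N" "h \<in> N" and V: "openin \<tau> V" "\<one> \<in> V" and NV: "N \<times> V \<subseteq> P"
    by blast
  have "inv z \<otimes> g \<otimes> z \<in> W" if "z \<in> N" "g \<in> V" for z g
  proof -
    have "(z, g) \<in> P"
      using NV that by blast
    then show ?thesis
      by (simp add: P_def \<phi>_def)
  qed
  with N V show ?thesis
    by (rule that)
qed

lemma (in group) bad_conjugators_escape_closure:
  assumes top: "topspace \<tau> = carrier G"
    and mul: "continuous_map (prod_topology \<tau> \<tau>) \<tau> (\<lambda>(x, y). x \<otimes> y)"
    and inv: "continuous_map \<tau> \<tau> (\<lambda>x. inv x)"
    and W: "openin \<tau> W" "\<one> \<in> W" "W \<subseteq> U" and "h \<in> carrier G"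
    and V_base: "\<And>W x. openin \<tau> W \<Longrightarrow> x \<in> W \<Longrightarrow> \<exists>i. P i \<and> x \<in> V i \<and> V i \<subseteq> W"
  obtains i where "P i" and "\<one> \<in> V i" and "h \<notin> \<tau> closure_of bad_conjugators G U C (V i)"
proof -
  obtain N V' where N: "openin \<tau> N" "h \<in> N" and V': "openin \<tau> V'" "\<one> \<in> V'"
    and conj: "\<And>z g. z \<in> N \<Longrightarrow> g \<in> V' \<Longrightarrow> inv z \<otimes> g \<otimes> z \<in> W"
    using conjugation_locally_uniform[OF top mul inv W(1,2) \<open>h \<in> carrier G\<close>] by blast
  obtain i where i: "P i" "\<one> \<in> V i" and "V i \<subseteq> V'"
    using V_base[OF V'] by blast
  have "N \<inter> bad_conjugators G U C (V i) = {}"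
    using conj \<open>V i \<subseteq> V'\<close> W(3) unfolding bad_conjugators_def by blast
  then have "h \<notin> \<tau> closure_of bad_conjugators G U C (V i)"
    using N by (auto simp: in_closure_of)
  with i show ?thesis
    by (rule that)
qed

lemma basic_nbhd_without_bad_conjugators:
  fixes S :: "'a::linorder list set \<Rightarrow> bool"
  assumes ds: "definable_structure addm S" and TG: "definable_topological_group S n Gr \<tau>"
    and "S B" and B_open: "\<And>y. length y = k \<Longrightarrow> openin \<tau> (fiber B y n)"
    and B_base: "\<And>W x. openin \<tau> W \<Longrightarrow> x \<in> W \<Longrightarrow> \<exists>y. length y = k \<and> x \<in> fiber B y n \<and> fiber B y n \<subseteq> W"
    and W: "openin \<tau> W" "\<one>\<^bsub>Gr\<^esub> \<in> W" "W \<subseteq> U" and "S U"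
    and "S C" and C_carrier: "C \<subseteq> carrier Gr" and compact: "definably_compact S n \<tau> C"
  shows "\<exists>y. length y = k \<and> \<one>\<^bsub>Gr\<^esub> \<in> fiber B y n \<and> bad_conjugators Gr U C (fiber B y n) = {}"
proof (rule ccontr)
  assume no_nbhd: "\<nexists>y. length y = k \<and> \<one>\<^bsub>Gr\<^esub> \<in> fiber B y n \<and> bad_conjugators Gr U C (fiber B y n) = {}"
  then have nonempty: "bad_conjugators Gr U C (fiber B y n) \<noteq> {}"
    if "length y = k" and "\<one>\<^bsub>Gr\<^esub> \<in> fiber B y n" for y
    using that by blast
  from TG have G: "definable_group S n Gr" and top: "topspace \<tau> = carrier Gr"
    and base: "definable_open_base S n \<tau>"
    and mul: "continuous_map (prod_topology \<tau> \<tau>) \<tau> (\<lambda>(x, y). x \<otimes>\<^bsub>Gr\<^esub> y)"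
    and inv: "continuous_map \<tau> \<tau> (\<lambda>x. inv\<^bsub>Gr\<^esub> x)"
    unfolding definable_topological_group_def by auto
  interpret G: group Gr
    using G by (simp add: definable_group_def)
  have B_carrier: "fiber B y n \<subseteq> carrier Gr" if "length y = k" for y
    using openin_subset[OF B_open[OF that]] top by simp
  have "C \<subseteq> topspace \<tau>" and "\<one>\<^bsub>Gr\<^esub> \<in> topspace \<tau>"
    using C_carrier top by auto
  then obtain h where "h \<in> C" and h: "\<And>y. length y = k \<Longrightarrow> \<one>\<^bsub>Gr\<^esub> \<in> fiber B y n \<Longrightarrow>
      h \<in> \<tau> closure_of bad_conjugators Gr U C (fiber B y n)"
    using definably_compact_cluster_point_at[OF ds base compact \<open>S C\<close> _ \<open>S B\<close> B_open B_base _
        definable_bad_conjugators[OF ds G \<open>S U\<close> \<open>S B\<close> \<open>S C\<close> C_carrier B_carrier]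
        bad_conjugators_mono bad_conjugators_subset nonempty]
    by blast
  obtain y where "length y = k" and "\<one>\<^bsub>Gr\<^esub> \<in> fiber B y n"
    and "h \<notin> \<tau> closure_of bad_conjugators Gr U C (fiber B y n)"
    using \<open>h \<in> C\<close> C_carrier G.bad_conjugators_escape_closure[OF top mul inv W _ B_base] by blast
  with h show False
    by blast
qed

theorem lemma5p3:
  fixes addm :: "'m::{dense_linorder,no_top,no_bot} \<Rightarrow> 'm \<Rightarrow> 'm"
    and z :: 'm
    and S :: "'m list set \<Rightarrow> bool"
    and n :: nat
    and Gr :: "'m list monoid"
    and \<tau> :: "'m list topology"
    and U C :: "'m list set"
  assumes "ordered_group addm z"
    and "definable_structure addm S"
    and "locally_o_minimal S"
    and "definably_complete S"
    and "definable_topological_group S n Gr \<tau>"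
    and "definable_curve_selection S \<tau>"
    and "definable_nbhd S \<tau> U \<one>\<^bsub>Gr\<^esub>"
    and "S C" and "C \<subseteq> carrier Gr"
    and "definably_compact S n \<tau> C"
  shows "\<exists>W. openin \<tau> W \<and> \<one>\<^bsub>Gr\<^esub> \<in> W \<and>
           W \<subseteq> (\<Inter>h\<in>C. {h \<otimes>\<^bsub>Gr\<^esub> u \<otimes>\<^bsub>Gr\<^esub> inv\<^bsub>Gr\<^esub> h | u. u \<in> U})"
proof -
  from assms(5) have "group Gr" and top: "topspace \<tau> = carrier Gr"
    unfolding definable_topological_group_def definable_group_def by auto
  obtain k B where B_open: "\<And>y. length y = k \<Longrightarrow> openin \<tau> (fiber B y n)" and "S B"
    and B_base: "\<And>W x. openin \<tau> W \<Longrightarrow> x \<in> W \<Longrightarrow> \<exists>y. length y = k \<and> x \<in> fiber B y n \<and> fiber B y n \<subseteq> W"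
    using assms(5) unfolding definable_topological_group_def definable_open_base_def by blast
  obtain W where W: "openin \<tau> W" "\<one>\<^bsub>Gr\<^esub> \<in> W" "W \<subseteq> U" and "S U"
    using assms(7) unfolding definable_nbhd_def by blast
  obtain y where "length y = k" and "\<one>\<^bsub>Gr\<^esub> \<in> fiber B y n"
    and "bad_conjugators Gr U C (fiber B y n) = {}"
    using basic_nbhd_without_bad_conjugators[OF assms(2,5) \<open>S B\<close> B_open B_base W \<open>S U\<close> assms(8-10)]
    by blast
  moreover have "fiber B y n \<subseteq> carrier Gr"
    using openin_subset[OF B_open[OF \<open>length y = k\<close>]] top by simp
  ultimately show ?thesis
    using group.conjugates_nbhd_if_no_bad_conjugators[OF \<open>group Gr\<close> B_open[OF \<open>length y = k\<close>]]
      assms(9) by blast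
qed

end
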